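(* Let $(G=(V,E),(p_e)_{e\in E})$ be an instance of the Independent Cascade (IC) model, let $k\in\mathbb{Z}^+$ and $d\in\mathbb{Z}^+$. Let $\pi_g$ be the greedy policy, and let $\alpha(T_g)$ be the regret ratio of the $(\pi_g,k,d)$-process (both defined in the context). Then for every policy $\pi_*$, \[F(\pi_g,k,d)\ \ge\ \big(1-e^{-1/\alpha(T_g)}\big)\cdot F(\pi_*,k,d).\]
   Context: IC model: a directed graph $G=(V,E)$ with a probability $p_e\in(0,1]$ on each edge. Each edge is independently live with probability $p_e$ and dead otherwise. Diffusion proceeds in rounds: in each round every node activated in the previous round (seed nodes count as activated when seeded) attempts to activate each inactive out-neighbor $u$ along edge $(v,u)$, succeeding iff the edge is live; the state (live/dead) of each attempted edge thereby becomes observed. A realization is a pair $\phi=(L(\phi),D(\phi))$ of disjoint subsets of $E$ (observed live and observed dead edges); it is full if $L(\phi)\cup D(\phi)=E$; $\Psi$ denotes the set of full realizations, $\phi_\emptyset=(\emptyset,\emptyset)$. $\phi_1\prec\phi_2$ means $L(\phi_1)\subseteq L(\phi_2)$ and $D(\phi_1)\subseteq D(\phi_2)$, and $\Pr[\phi_2\mid\phi_1]=\prod_{e\in L(\phi_2)\setminus L(\phi_1)}p_e\prod_{e\in D(\phi_2)\setminus D(\phi_1)}(1-p_e)$; $\Pr[\phi]=\Pr[\phi\mid\phi_\emptyset]$. A status is a pair $U=(\dot S(U),\dot\phi(U))$ of a set of currently active nodes and a realization of the observed edges. For $S\subseteq V$, full $\psi$ and $t\in\mathbb{Z}^+\cup\{\infty\}$,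 $A_t(S,\psi)$ is the set of nodes $v$ such that some node of $S$ reaches $v$ via a path of at most $t$ edges (any length if $t=\infty$) all in $L(\psi)$. Define $\Delta_t(S,V^*,\psi)=|A_t(S\cup V^*,\psi)|-|A_t(S,\psi)|$ and $\Delta f_t(S,V^*,\phi)=\sum_{\psi\in\Psi,\ \phi\prec\psi}\Pr[\psi\mid\phi]\,\Delta_t(S,V^*,\psi)$. A policy $\pi$ maps each status $(S,\phi)$ to a single node $\pi(S,\phi)\in V$. The $(\pi,k,d)$-process: set $(S,\phi)=(\emptyset,\phi_\emptyset)$; repeat $k$ times: (seeding step) select and activate the node $\pi(S,\phi)$; (observing step) observe the diffusion for $d$ rounds (waiting a round is allowed even if nothing can spread) and update $S$ to the set of currently active nodes and $\phi$ to the currently observed realization. Finally let the diffusion run until it terminates. $F(\pi,k,d)$ is the expected number of active nodes at the end. The greedy policy is $\pi_g(S,\phi)\in\arg\max_{v\in V}\Delta f_\infty(S,\{v\},\phi)$. For a status $U$, let $\dot{\mathcal U}_\infty(U)$ be the set of possible statuses reached when, starting from $U$, the diffusion continues without new seeds until it terminates (each with probability $\Pr[\dot\phi(U_* )\mid\dot\phi(U)]$). Define \[\alpha_{\infty,\infty}(U)=\frac{\sum_{U_*\in\dot{\mathcal U}_\infty(U)}\Pr[\dot\phi(U_* )\mid\dot\phi(U)]\max_v\Delta f_\infty(\dot S(U_* ),\{v\},\dot\phi(U_* ))}{\max_v\Delta f_\infty(\dot S(U),\{v\},\dot\phi(U))}.\] $\alpha(T_g)$ is the maximum of $\alpha_{\infty,\infty}(U)$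 over all statuses $U$ that appear in the decision tree $T_g$ of the $(\pi_g,k,d)$-process, i.e., over the initial status $(\emptyset,\phi_\emptyset)$ and every status that can be observed (with positive probability) at a seeding step of that process. *)

theory Defs
  imports Complex_Main
begin

text \<open>IC model on a finite directed graph whose vertex set is the whole (finite) type 'v.  A realization is a pair (L,D) of
  observed live / observed dead edges; a status is a pair (S, phi).\<close>

type_synonym 'v edge = "'v \<times> 'v"
type_synonym 'v realization = "'v edge set \<times> 'v edge set"
type_synonym 'v status = "'v set \<times> 'v realization"
type_synonym 'v policy = "'v set \<Rightarrow> 'v realization \<Rightarrow> 'v"

definition is_realization :: "'v edge set \<Rightarrow> 'v realization \<Rightarrow> bool" where
  "is_realization E phi \<longleftrightarrow> fst phi \<subseteq> E \<and> snd phi \<subseteq> E \<and> fst phi \<inter> snd phi = {}"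

definition full_realizations :: "'v edge set \<Rightarrow> 'v realization set" where
  "full_realizations E = {phi. is_realization E phi \<and> fst phi \<union> snd phi = E}"

definition prec :: "'v realization \<Rightarrow> 'v realization \<Rightarrow> bool" where
  "prec phi1 phi2 \<longleftrightarrow> fst phi1 \<subseteq> fst phi2 \<and> snd phi1 \<subseteq> snd phi2"

definition cond_prob :: "('v edge \<Rightarrow> real) \<Rightarrow> 'v realization \<Rightarrow> 'v realization \<Rightarrow> real" where
  "cond_prob p phi2 phi1 =
     (\<Prod>e\<in>fst phi2 - fst phi1. p e) * (\<Prod>e\<in>snd phi2 - snd phi1. 1 - p e)"

definition real_prob :: "('v edge \<Rightarrow> real) \<Rightarrow> 'v realization \<Rightarrow> real" where
  "real_prob p phi = cond_prob p phi ({}, {})"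

definition reach_inf :: "'v set \<Rightarrow> 'v realization \<Rightarrow> 'v set" where
  "reach_inf S psi = {v. \<exists>s\<in>S. (s, v) \<in> (fst psi)\<^sup>*}"

definition Delta_inf :: "'v set \<Rightarrow> 'v set \<Rightarrow> 'v realization \<Rightarrow> real" where
  "Delta_inf S Vs psi = real (card (reach_inf (S \<union> Vs) psi)) - real (card (reach_inf S psi))"

definition Delta_f_inf :: "'v edge set \<Rightarrow> ('v edge \<Rightarrow> real) \<Rightarrow> 'v set \<Rightarrow> 'v set \<Rightarrow> 'v realization \<Rightarrow> real" where
  "Delta_f_inf E p S Vs phi =
     (\<Sum>psi\<in>{psi \<in> full_realizations E. prec phi psi}. cond_prob p psi phi * Delta_inf S Vs psi)"

definition max_gain :: "'v::finite edge set \<Rightarrow> ('v edge \<Rightarrow> real) \<Rightarrow> 'v status \<Rightarrow> real" where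
  "max_gain E p U = Max (range (\<lambda>v. Delta_f_inf E p (fst U) {v} (snd U)))"

definition is_greedy :: "'v::finite edge set \<Rightarrow> ('v edge \<Rightarrow> real) \<Rightarrow> 'v policy \<Rightarrow> bool" where
  "is_greedy E p pol \<longleftrightarrow>
     (\<forall>S phi. Delta_f_inf E p S {pol S phi} phi = max_gain E p (S, phi))"

text \<open>Nodes activated in the
  previous round (including seeds) are exactly the active nodes that still have
  unobserved out-edges to inactive nodes; so one round attempts precisely the
  unobserved edges from active to inactive nodes.\<close>
definition diff_round :: "'v edge set \<Rightarrow> 'v edge set \<Rightarrow> 'v status \<Rightarrow> 'v status" where
  "diff_round E Lt U =
     (let S = fst U; L = fst (snd U); D = snd (snd U);
          A = {e \<in> E. fst e \<in> S \<and> snd e \<notin> S \<and> e \<notin> L \<and> e \<notin> D}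
      in (S \<union> snd ` (A \<inter> Lt), (L \<union> (A \<inter> Lt), D \<union> (A - Lt))))"

definition seed_step :: "'v edge set \<Rightarrow> 'v edge set \<Rightarrow> 'v policy \<Rightarrow> nat \<Rightarrow> 'v status \<Rightarrow> 'v status" where
  "seed_step E Lt pol d U = (diff_round E Lt ^^ d) (fst U \<union> {pol (fst U) (snd U)}, snd U)"

definition proc_status :: "'v edge set \<Rightarrow> 'v edge set \<Rightarrow> 'v policy \<Rightarrow> nat \<Rightarrow> nat \<Rightarrow> 'v status" where
  "proc_status E Lt pol d i = (seed_step E Lt pol d ^^ i) ({}, ({}, {}))"

text \<open>Running the diffusion until it terminates: CARD('v) rounds always suffice.\<close>
definition run_to_end :: "'v::finite edge set \<Rightarrow> 'v edge set \<Rightarrow> 'v status \<Rightarrow> 'v status" where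
  "run_to_end E Lt U = (diff_round E Lt ^^ card (UNIV :: 'v set)) U"

definition F_val :: "'v::finite edge set \<Rightarrow> ('v edge \<Rightarrow> real) \<Rightarrow> 'v policy \<Rightarrow> nat \<Rightarrow> nat \<Rightarrow> real" where
  "F_val E p pol k d =
     (\<Sum>psi\<in>full_realizations E.
        real_prob p psi * real (card (fst (run_to_end E (fst psi) (proc_status E (fst psi) pol d k)))))"

definition final_statuses :: "'v::finite edge set \<Rightarrow> 'v status \<Rightarrow> 'v status set" where
  "final_statuses E U = {run_to_end E (fst psi) U | psi. psi \<in> full_realizations E \<and> prec (snd U) psi}"

definition alpha_inf :: "'v::finite edge set \<Rightarrow> ('v edge \<Rightarrow> real) \<Rightarrow> 'v status \<Rightarrow> real" where
  "alpha_inf E p U =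
     (\<Sum>U'\<in>final_statuses E U. cond_prob p (snd U') (snd U) * max_gain E p U') / max_gain E p U"

definition tree_statuses :: "'v edge set \<Rightarrow> ('v edge \<Rightarrow> real) \<Rightarrow> 'v policy \<Rightarrow> nat \<Rightarrow> nat \<Rightarrow> 'v status set" where
  "tree_statuses E p pol k d =
     {proc_status E (fst psi) pol d i | psi i. psi \<in> full_realizations E \<and> real_prob p psi > 0 \<and> i < k}"

definition alpha_tree :: "'v::finite edge set \<Rightarrow> ('v edge \<Rightarrow> real) \<Rightarrow> 'v policy \<Rightarrow> nat \<Rightarrow> nat \<Rightarrow> real" where
  "alpha_tree E p pol k d = Max (alpha_inf E p ` tree_statuses E p pol k d)"

end

theory Submission
  imports Defs
begin

text \<open>Let F i be the expected spread after i greedy seeding steps and fix i < k.  Add the k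
  seeds of any other policy on top of the greedy active set.  Given the live edges leaving
  the set X reached so far, the edges not leaving X are still independent, so each added
  seed t contributes on average its spread outside X; this is at most the best spread
  outside the set reached by the first i greedy seeds, which is the best expected gain at
  the status where the greedy diffusion has terminated.  By definition of the regret ratio
  alpha, the average of that best gain is at most alpha times the greedy gain
  F (i + 1) - F i.  Hence OPT \<le> F i + k alpha (F (i + 1) - F i), and the classical
  recurrence gives F k \<ge> (1 - (1 - 1/(k alpha))^k) OPT \<ge> (1 - exp (- 1/alpha)) OPT.
  Expectations are sums over live-edge sets weighted by the product measure; a status of
  the process depends only on the edges it has observed, which makes conditioning on it a
  tower property of that measure.\<close>

section \<open>Product measure on sets of live edges\<close>

definition subset_weight :: "('e \<Rightarrow> real) \<Rightarrow> 'e set \<Rightarrow> 'e set \<Rightarrow> real" where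
  "subset_weight p B m = (\<Prod>e\<in>m. p e) * (\<Prod>e\<in>B - m. 1 - p e)"

lemma sum_subset_weight: "finite B \<Longrightarrow> (\<Sum>m\<in>Pow B. subset_weight p B m) = 1"
  using prod_add[of B p "\<lambda>e. 1 - p e"] by (simp add: subset_weight_def)

lemma subset_weight_nonneg:
  "\<forall>e\<in>B. 0 \<le> p e \<and> p e \<le> 1 \<Longrightarrow> m \<subseteq> B \<Longrightarrow> 0 \<le> subset_weight p B m"
  unfolding subset_weight_def by (intro mult_nonneg_nonneg prod_nonneg) auto

lemma subset_weight_split:
  assumes "finite E" "B \<subseteq> E" "L \<subseteq> E"
  shows "subset_weight p E L = subset_weight p B (L \<inter> B) * subset_weight p (E - B) (L - B)"
proof -
  have fin: "finite L" "finite (E - L)" using assms finite_subset by auto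
  have live: "(\<Prod>e\<in>L. p e) = (\<Prod>e\<in>L \<inter> B. p e) * (\<Prod>e\<in>L - B. p e)"
    using prod.Int_Diff[OF fin(1)] by blast
  have dead: "(\<Prod>e\<in>E - L. 1 - p e) = (\<Prod>e\<in>(E - L) \<inter> B. 1 - p e) * (\<Prod>e\<in>(E - L) - B. 1 - p e)"
    using prod.Int_Diff[OF fin(2)] by blast
  have "(E - L) \<inter> B = B - L \<inter> B" "(E - L) - B = (E - B) - (L - B)" using assms by auto
  then show ?thesis unfolding subset_weight_def live dead by (simp add: algebra_simps)
qed

lemma sum_Pow_Diff_reindex:
  assumes "finite E" "B \<subseteq> E" "K \<subseteq> B"
  shows "(\<Sum>m\<in>Pow (E - B). g (K \<union> m)) = (\<Sum>M\<in>{M\<in>Pow E. M \<inter> B = K}. g M)"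
proof (rule sum.reindex_bij_betw)
  show "bij_betw ((\<union>) K) (Pow (E - B)) {M \<in> Pow E. M \<inter> B = K}"
    by (rule bij_betw_byWitness[where f' = "\<lambda>M. M - B"]) (use assms in auto)
qed

lemma sum_subset_weight_fiber:
  assumes "finite E" "B \<subseteq> E" "K \<subseteq> B"
  shows "(\<Sum>M\<in>{M\<in>Pow E. M \<inter> B = K}. subset_weight p E M * f M)
       = subset_weight p B K * (\<Sum>m\<in>Pow (E - B). subset_weight p (E - B) m * f (K \<union> m))"
proof -
  have "(\<Sum>M\<in>{M\<in>Pow E. M \<inter> B = K}. subset_weight p E M * f M)
      = (\<Sum>m\<in>Pow (E - B). subset_weight p E (K \<union> m) * f (K \<union> m))"
    using sum_Pow_Diff_reindex[OF assms, of "\<lambda>M. subset_weight p E M * f M"] by simp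
  also have "\<dots> = (\<Sum>m\<in>Pow (E - B). subset_weight p B K * (subset_weight p (E - B) m * f (K \<union> m)))"
  proof (intro sum.cong refl)
    fix m assume "m \<in> Pow (E - B)"
    then have "(K \<union> m) \<inter> B = K" "(K \<union> m) - B = m" "K \<union> m \<subseteq> E" using assms by auto
    then show "subset_weight p E (K \<union> m) * f (K \<union> m) = subset_weight p B K * (subset_weight p (E - B) m * f (K \<union> m))"
      using subset_weight_split[OF assms(1,2), of "K \<union> m" p] by simp
  qed
  finally show ?thesis by (simp add: sum_distrib_left)
qed

text \<open>Tower property of the product measure: if the set Ob L of revealed edges and the
  quantity c L depend only on what is revealed, then first averaging over the unrevealed
  edges does not change the expectation.  Both sides are grouped by the revealed pattern.\<close>
lemma subset_weight_tower:
  fixes Ob :: "'e set \<Rightarrow> 'e set" and c :: "'e set \<Rightarrow> 'c"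
  assumes fin: "finite E"
    and Ob_subset: "\<And>L. L \<subseteq> E \<Longrightarrow> Ob L \<subseteq> E"
    and local: "\<And>L L'. L \<subseteq> E \<Longrightarrow> L' \<subseteq> E \<Longrightarrow> L' \<inter> Ob L = L \<inter> Ob L \<Longrightarrow> Ob L' = Ob L \<and> c L' = c L"
  shows "(\<Sum>L\<in>Pow E. subset_weight p E L *
            (\<Sum>m\<in>Pow (E - Ob L). subset_weight p (E - Ob L) m * Z (c L) (L \<inter> Ob L \<union> m)))
       = (\<Sum>L\<in>Pow E. subset_weight p E L * Z (c L) L)"
proof -
  define key where "key L = (Ob L, L \<inter> Ob L)" for L
  define inner where "inner L = (\<Sum>m\<in>Pow (E - Ob L). subset_weight p (E - Ob L) m * Z (c L) (L \<inter> Ob L \<union> m))" for L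
  have fiber: "{L \<in> Pow E. key L = key L0} = {L \<in> Pow E. L \<inter> Ob L0 = L0 \<inter> Ob L0}" if "L0 \<in> Pow E" for L0
  proof (intro set_eqI iffI)
    fix L assume "L \<in> {L \<in> Pow E. L \<inter> Ob L0 = L0 \<inter> Ob L0}"
    then show "L \<in> {L \<in> Pow E. key L = key L0}"
      using local[of L0 L] that unfolding key_def by auto
  qed (auto simp: key_def)
  have "(\<Sum>L\<in>{L \<in> Pow E. key L = key L0}. subset_weight p E L * inner L)
      = (\<Sum>L\<in>{L \<in> Pow E. key L = key L0}. subset_weight p E L * Z (c L) L)" if L0: "L0 \<in> Pow E" for L0
  proof -
    have const: "c L = c L0" "inner L = inner L0" if "L \<in> {L \<in> Pow E. key L = key L0}" for L
      using that local[of L0 L] L0 unfolding key_def inner_def by auto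
    have "(\<Sum>L\<in>{L \<in> Pow E. key L = key L0}. subset_weight p E L * inner L)
        = (\<Sum>L\<in>{L \<in> Pow E. key L = key L0}. subset_weight p E L * 1) * inner L0"
      using const(2) by (simp add: sum_distrib_right)
    also have "\<dots> = (\<Sum>L\<in>{L \<in> Pow E. L \<inter> Ob L0 = L0 \<inter> Ob L0}. subset_weight p E L * 1) * inner L0"
      by (simp only: fiber[OF L0])
    also have "\<dots> = subset_weight p (Ob L0) (L0 \<inter> Ob L0) * inner L0"
      using sum_subset_weight_fiber[OF fin Ob_subset, of L0 "L0 \<inter> Ob L0" p "\<lambda>_. 1"] L0
        sum_subset_weight[of "E - Ob L0" p] fin by simp
    also have "\<dots> = (\<Sum>L\<in>{L \<in> Pow E. L \<inter> Ob L0 = L0 \<inter> Ob L0}. subset_weight p E L * Z (c L0) L)"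
      using sum_subset_weight_fiber[OF fin Ob_subset, of L0 "L0 \<inter> Ob L0" p "Z (c L0)"] L0
      unfolding inner_def by simp
    also have "\<dots> = (\<Sum>L\<in>{L \<in> Pow E. key L = key L0}. subset_weight p E L * Z (c L) L)"
      unfolding fiber[OF L0, symmetric] using const(1) by (intro sum.cong) auto
    finally show ?thesis .
  qed
  then have fibers: "(\<Sum>L\<in>{L \<in> Pow E. key L = k}. subset_weight p E L * inner L)
      = (\<Sum>L\<in>{L \<in> Pow E. key L = k}. subset_weight p E L * Z (c L) L)" if "k \<in> key ` Pow E" for k
    using that by auto
  have "(\<Sum>L\<in>Pow E. subset_weight p E L * inner L)
      = (\<Sum>k\<in>key ` Pow E. \<Sum>L\<in>{L \<in> Pow E. key L = k}. subset_weight p E L * inner L)"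
    by (rule sum.image_gen) (simp add: fin)
  also have "\<dots> = (\<Sum>k\<in>key ` Pow E. \<Sum>L\<in>{L \<in> Pow E. key L = k}. subset_weight p E L * Z (c L) L)"
    using fibers by (rule sum.cong[OF refl])
  also have "\<dots> = (\<Sum>L\<in>Pow E. subset_weight p E L * Z (c L) L)"
    by (rule sum.image_gen[symmetric]) (simp add: fin)
  finally show ?thesis unfolding inner_def .
qed

lemma sum_subset_weight_marginal:
  assumes fin: "finite E" and B: "B \<subseteq> E"
  shows "(\<Sum>M\<in>Pow E. subset_weight p E M * f (M \<inter> B)) = (\<Sum>K\<in>Pow B. subset_weight p B K * f K)"
proof -
  have image: "(\<lambda>M. M \<inter> B) ` Pow E = Pow B" using B by auto
  have "(\<Sum>M\<in>Pow E. subset_weight p E M * f (M \<inter> B))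
      = (\<Sum>K\<in>Pow B. \<Sum>M\<in>{M \<in> Pow E. M \<inter> B = K}. subset_weight p E M * f (M \<inter> B))"
    using sum.image_gen[of "Pow E" "\<lambda>M. subset_weight p E M * f (M \<inter> B)" "\<lambda>M. M \<inter> B"] fin
    unfolding image by simp
  also have "\<dots> = (\<Sum>K\<in>Pow B. \<Sum>M\<in>{M \<in> Pow E. M \<inter> B = K}. subset_weight p E M * f K)"
    by (intro sum.cong refl) auto
  also have "\<dots> = (\<Sum>K\<in>Pow B. subset_weight p B K * f K)"
  proof (intro sum.cong refl)
    fix K assume "K \<in> Pow B"
    then show "(\<Sum>M\<in>{M \<in> Pow E. M \<inter> B = K}. subset_weight p E M * f K) = subset_weight p B K * f K"
      using sum_subset_weight_fiber[OF fin B, of K p "\<lambda>_. f K"] sum_subset_weight[of "E - B" p] fin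
      by (simp add: sum_distrib_right[symmetric])
  qed
  finally show ?thesis .
qed

section \<open>Reachability along live edges\<close>

definition reach :: "('v \<times> 'v) set \<Rightarrow> 'v set \<Rightarrow> 'v set" where
  "reach Lt S = {v. \<exists>s\<in>S. (s, v) \<in> Lt\<^sup>*}"

definition forward_closed :: "('v \<times> 'v) set \<Rightarrow> 'v set \<Rightarrow> bool" where
  "forward_closed Lt X \<longleftrightarrow> (\<forall>a b. (a, b) \<in> Lt \<longrightarrow> a \<in> X \<longrightarrow> b \<in> X)"

lemma reach_inf_eq_reach: "reach_inf S psi = reach (fst psi) S"
  by (simp add: reach_inf_def reach_def)

lemma subset_reach: "S \<subseteq> reach Lt S"
  by (auto simp: reach_def)

lemma reach_mono: "S \<subseteq> T \<Longrightarrow> Lt \<subseteq> Lt' \<Longrightarrow> reach Lt S \<subseteq> reach Lt' T"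
  unfolding reach_def using rtrancl_mono by blast

lemma reach_Un: "reach Lt (A \<union> B) = reach Lt A \<union> reach Lt B"
  by (auto simp: reach_def)

lemma reach_empty [simp]: "reach Lt {} = {}"
  by (simp add: reach_def)

lemma reach_least: "forward_closed Lt X \<Longrightarrow> S \<subseteq> X \<Longrightarrow> reach Lt S \<subseteq> X"
proof
  fix v assume closed: "forward_closed Lt X" and "S \<subseteq> X" and "v \<in> reach Lt S"
  then obtain s where s: "s \<in> X" "(s, v) \<in> Lt\<^sup>*" by (auto simp: reach_def)
  from s(2) show "v \<in> X"
    by (induction rule: rtrancl_induct) (use s(1) closed in \<open>auto simp: forward_closed_def\<close>)
qed

lemma forward_closed_reach: "forward_closed Lt (reach Lt S)"
  unfolding forward_closed_def reach_def by (blast intro: rtrancl.rtrancl_into_rtrancl)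

lemma reach_reach: "reach Lt (reach Lt S) = reach Lt S"
  by (rule subset_antisym[OF reach_least[OF forward_closed_reach order_refl] subset_reach])

lemma reach_absorb: "S \<subseteq> T \<Longrightarrow> T \<subseteq> reach Lt S \<Longrightarrow> reach Lt T = reach Lt S"
  using reach_mono[of T "reach Lt S" Lt Lt] reach_mono[of S T Lt Lt] reach_reach[of Lt S] by auto

lemma reach_forward_closed: "forward_closed Lt X \<Longrightarrow> reach Lt X = X"
  by (simp add: reach_least subset_antisym subset_reach)

lemma reach_cong:
  assumes "\<And>e. fst e \<in> reach Lt A \<Longrightarrow> e \<in> Lt \<longleftrightarrow> e \<in> Lt'"
  shows "reach Lt' A = reach Lt A"
proof
  show "reach Lt A \<subseteq> reach Lt' A"
  proof
    fix v assume "v \<in> reach Lt A"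
    then obtain a where a: "a \<in> A" "(a, v) \<in> Lt\<^sup>*" by (auto simp: reach_def)
    from a(2) have "(a, v) \<in> Lt'\<^sup>*"
    proof (induction rule: rtrancl_induct)
      case (step y z)
      have "y \<in> reach Lt A" using a step by (auto simp: reach_def)
      then have "(y, z) \<in> Lt'" using assms[of "(y, z)"] step by auto
      then show ?case using step by (blast intro: rtrancl.rtrancl_into_rtrancl)
    qed simp
    then show "v \<in> reach Lt' A" using a by (auto simp: reach_def)
  qed
  have "forward_closed Lt' (reach Lt A)"
    unfolding forward_closed_def
  proof (intro allI impI)
    fix a b assume "(a, b) \<in> Lt'" "a \<in> reach Lt A"
    then show "b \<in> reach Lt A"
      using assms[of "(a, b)"] forward_closed_reach[of Lt A] unfolding forward_closed_def by auto
  qed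
  then show "reach Lt' A \<subseteq> reach Lt A" by (rule reach_least[OF _ subset_reach])
qed

lemma reach_Diff_forward_closed:
  assumes closed: "forward_closed Lt X"
  shows "reach Lt {t} - X = reach {e \<in> Lt. fst e \<notin> X} {t} - X"
proof
  show "reach {e \<in> Lt. fst e \<notin> X} {t} - X \<subseteq> reach Lt {t} - X"
    using reach_mono[of "{t}" "{t}" "{e \<in> Lt. fst e \<notin> X}" Lt] by blast
  show "reach Lt {t} - X \<subseteq> reach {e \<in> Lt. fst e \<notin> X} {t} - X"
  proof
    fix v assume v: "v \<in> reach Lt {t} - X"
    have "(t, v) \<in> Lt\<^sup>*" using v by (simp add: reach_def)
    moreover have "v \<notin> X" using v by blast
    ultimately have "(t, v) \<in> {e \<in> Lt. fst e \<notin> X}\<^sup>*"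
    proof (induction rule: rtrancl_induct)
      case (step y z)
      have "y \<notin> X" using closed step.hyps(2) step.prems unfolding forward_closed_def by blast
      then have "(y, z) \<in> {e \<in> Lt. fst e \<notin> X}" using step.hyps(2) by simp
      then show ?case using step.IH[OF \<open>y \<notin> X\<close>] by (simp add: rtrancl.rtrancl_into_rtrancl)
    qed simp
    then show "v \<in> reach {e \<in> Lt. fst e \<notin> X} {t} - X" using v by (simp add: reach_def)
  qed
qed

lemma card_reach_insert:
  fixes R :: "'v::finite set"
  assumes "reach Lt R = R"
  shows "card (reach Lt (R \<union> {v})) = card R + card (reach Lt {v} - R)"
proof -
  have "reach Lt (R \<union> {v}) = R \<union> (reach Lt {v} - R)" using reach_Un[of Lt R "{v}"] assms by auto
  then show ?thesis by (metis card_Un_disjoint finite Diff_disjoint Int_commute)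
qed

lemma Delta_inf_forward_closed:
  fixes R :: "'v::finite set"
  assumes closed: "forward_closed (fst psi) R"
  shows "Delta_inf R {v} psi = real (card (reach {e \<in> fst psi. fst e \<notin> R} {v} - R))"
proof -
  have R: "reach (fst psi) R = R" by (rule reach_forward_closed[OF closed])
  have "Delta_inf R {v} psi = real (card (reach (fst psi) {v} - R))"
    unfolding Delta_inf_def reach_inf_eq_reach card_reach_insert[OF R] R by simp
  then show ?thesis by (simp only: reach_Diff_forward_closed[OF closed])
qed

section \<open>The diffusion process\<close>

definition observed :: "'v status \<Rightarrow> 'v edge set" where
  "observed U = fst (snd U) \<union> snd (snd U)"

definition consistent :: "'v edge set \<Rightarrow> 'v edge set \<Rightarrow> 'v status \<Rightarrow> bool" where
  "consistent E Lt U \<longleftrightarrow> fst (snd U) \<subseteq> Lt \<and> fst (snd U) \<subseteq> E \<and> snd (snd U) \<subseteq> E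
     \<and> snd (snd U) \<inter> Lt = {} \<and> (\<forall>e\<in>fst (snd U). snd e \<in> fst U) \<and> (\<forall>e\<in>observed U. fst e \<in> fst U)"

definition attempted :: "'v edge set \<Rightarrow> 'v status \<Rightarrow> 'v edge set" where
  "attempted E U = {e \<in> E. fst e \<in> fst U \<and> snd e \<notin> fst U \<and> e \<notin> observed U}"

lemma consistent_snd: "consistent E Lt U \<Longrightarrow> snd U = (Lt \<inter> observed U, observed U - Lt)"
  unfolding consistent_def observed_def by (cases U) auto

lemma consistent_observed_subset: "consistent E Lt U \<Longrightarrow> observed U \<subseteq> {e \<in> E. fst e \<in> fst U}"
  unfolding consistent_def observed_def by auto

lemma consistent_change_live:
  "consistent E Lt U \<Longrightarrow> Lt' \<inter> observed U = Lt \<inter> observed U \<Longrightarrow> consistent E Lt' U"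
  unfolding consistent_def observed_def by blast

lemma diff_round_eq:
  "diff_round E Lt U = (fst U \<union> snd ` (attempted E U \<inter> Lt),
     (fst (snd U) \<union> (attempted E U \<inter> Lt), snd (snd U) \<union> (attempted E U - Lt)))"
  by (simp add: diff_round_def attempted_def observed_def Let_def)

lemma consistent_diff_round: "consistent E Lt U \<Longrightarrow> consistent E Lt (diff_round E Lt U)"
  unfolding diff_round_eq consistent_def observed_def attempted_def by auto

lemma active_diff_round:
  "fst U \<subseteq> fst (diff_round E Lt U)" "fst (diff_round E Lt U) \<subseteq> reach Lt (fst U)"
proof -
  show "fst U \<subseteq> fst (diff_round E Lt U)" unfolding diff_round_eq by auto
  show "fst (diff_round E Lt U) \<subseteq> reach Lt (fst U)"
  proof
    fix x assume "x \<in> fst (diff_round E Lt U)"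
    then have "x \<in> fst U \<or> (\<exists>a\<in>fst U. (a, x) \<in> Lt)"
      unfolding diff_round_eq attempted_def by force
    then show "x \<in> reach Lt (fst U)" unfolding reach_def by blast
  qed
qed

lemma observed_diff_round:
  "observed U \<subseteq> observed (diff_round E Lt U)" "attempted E U \<subseteq> observed (diff_round E Lt U)"
  "prec (snd U) (snd (diff_round E Lt U))"
  unfolding diff_round_eq observed_def prec_def by auto

lemma diff_round_cong:
  assumes "Lt' \<inter> observed (diff_round E Lt U) = Lt \<inter> observed (diff_round E Lt U)"
  shows "diff_round E Lt' U = diff_round E Lt U"
proof -
  have "attempted E U \<inter> Lt' = attempted E U \<inter> Lt" "attempted E U - Lt' = attempted E U - Lt"
    using assms observed_diff_round(2)[of E U Lt] by blast+
  then show ?thesis unfolding diff_round_eq by simp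
qed

lemma consistent_funpow_diff_round:
  "consistent E Lt U \<Longrightarrow> consistent E Lt ((diff_round E Lt ^^ n) U)"
  by (induction n) (auto simp: consistent_diff_round)

lemma active_funpow_diff_round:
  "fst U \<subseteq> fst ((diff_round E Lt ^^ n) U)" "fst ((diff_round E Lt ^^ n) U) \<subseteq> reach Lt (fst U)"
proof (induction n)
  case (Suc n)
  have "fst ((diff_round E Lt ^^ Suc n) U) \<subseteq> reach Lt (fst ((diff_round E Lt ^^ n) U))"
    using active_diff_round(2) by simp
  also have "\<dots> \<subseteq> reach Lt (fst U)"
    using reach_mono[OF Suc.IH(2) order_refl, of Lt] reach_reach[of Lt "fst U"] by simp
  finally show "fst ((diff_round E Lt ^^ Suc n) U) \<subseteq> reach Lt (fst U)" .
  show "fst U \<subseteq> fst ((diff_round E Lt ^^ Suc n) U)"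
    using Suc.IH(1) active_diff_round(1)[of "(diff_round E Lt ^^ n) U" E Lt] by simp
qed (simp_all add: subset_reach)

lemma observed_funpow_diff_round:
  "observed U \<subseteq> observed ((diff_round E Lt ^^ n) U)" "prec (snd U) (snd ((diff_round E Lt ^^ n) U))"
proof (induction n)
  case (Suc n)
  then show "observed U \<subseteq> observed ((diff_round E Lt ^^ Suc n) U)"
    using observed_diff_round(1)[of "(diff_round E Lt ^^ n) U" E Lt] by auto
  show "prec (snd U) (snd ((diff_round E Lt ^^ Suc n) U))"
    using Suc.IH(2) observed_diff_round(3)[of "(diff_round E Lt ^^ n) U" E Lt]
    unfolding prec_def by auto
qed (simp_all add: prec_def)

lemma funpow_diff_round_cong:
  assumes "Lt' \<inter> observed ((diff_round E Lt ^^ n) U) = Lt \<inter> observed ((diff_round E Lt ^^ n) U)"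
  shows "(diff_round E Lt' ^^ n) U = (diff_round E Lt ^^ n) U"
  using assms
proof (induction n)
  case (Suc n)
  let ?V = "(diff_round E Lt ^^ n) U"
  have "observed ?V \<subseteq> observed ((diff_round E Lt ^^ Suc n) U)"
    using observed_diff_round(1) by simp
  then have "(diff_round E Lt' ^^ n) U = ?V" using Suc by blast
  moreover have "diff_round E Lt' ?V = diff_round E Lt ?V"
    using Suc.prems by (intro diff_round_cong) simp
  ultimately show ?case by simp
qed simp

lemma diff_round_idem_if_active_eq:
  assumes "fst (diff_round E Lt U) = fst U"
  shows "diff_round E Lt (diff_round E Lt U) = diff_round E Lt U"
proof -
  have "attempted E U \<inter> Lt = {}" using assms unfolding diff_round_eq attempted_def by auto
  then have "attempted E (diff_round E Lt U) = {}"
    unfolding attempted_def by (simp add: diff_round_eq observed_def) (auto simp: attempted_def observed_def)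
  then show ?thesis by (simp add: diff_round_eq[of E Lt "diff_round E Lt U"])
qed

lemma attempted_eq_empty_if_fixpoint:
  assumes fixpoint: "diff_round E Lt U = U"
  shows "attempted E U = {}"
proof -
  have "attempted E U \<subseteq> observed U"
    using observed_diff_round(2)[of E U Lt] fixpoint by simp
  then show ?thesis unfolding attempted_def by blast
qed

text \<open>Every round that changes the status activates a new node, so after CARD('v)
  rounds the diffusion has reached a fixpoint.\<close>
lemma funpow_diff_round_fixpoint:
  fixes U :: "'v::finite status"
  defines "N \<equiv> card (UNIV :: 'v set)"
  shows "diff_round E Lt ((diff_round E Lt ^^ N) U) = (diff_round E Lt ^^ N) U"
proof (rule ccontr)
  let ?f = "diff_round E Lt"
  have grow: "n + 1 \<le> card (fst ((?f ^^ n) U))" if "?f ((?f ^^ n) U) \<noteq> (?f ^^ n) U" for n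
    using that
  proof (induction n)
    case 0
    then have "fst U \<noteq> {}" by (cases U) (auto simp: diff_round_eq attempted_def)
    then show ?case by (simp add: card_gt_0_iff Suc_le_eq)
  next
    case (Suc n)
    have moved: "?f ((?f ^^ n) U) \<noteq> (?f ^^ n) U" using Suc.prems by auto
    have "fst ((?f ^^ Suc n) U) \<noteq> fst ((?f ^^ n) U)"
      using Suc.prems diff_round_idem_if_active_eq[of E Lt "(?f ^^ n) U"] by auto
    moreover have "fst ((?f ^^ n) U) \<subseteq> fst ((?f ^^ Suc n) U)" using active_diff_round(1) by simp
    ultimately have "fst ((?f ^^ n) U) \<subset> fst ((?f ^^ Suc n) U)" by blast
    then have "card (fst ((?f ^^ n) U)) < card (fst ((?f ^^ Suc n) U))" by (simp add: psubset_card_mono)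
    with Suc.IH[OF moved] show ?case by simp
  qed
  assume "\<not> ?f ((?f ^^ N) U) = (?f ^^ N) U"
  from grow[OF this] have "N + 1 \<le> card (fst ((?f ^^ N) U))" .
  moreover have "card (fst ((?f ^^ N) U)) \<le> N" unfolding N_def by (simp add: card_mono)
  ultimately show False by simp
qed

lemma attempted_run_to_end: "attempted E (run_to_end E Lt U) = {}"
  unfolding run_to_end_def by (rule attempted_eq_empty_if_fixpoint[OF funpow_diff_round_fixpoint])

lemma consistent_run_to_end: "consistent E Lt U \<Longrightarrow> consistent E Lt (run_to_end E Lt U)"
  unfolding run_to_end_def by (rule consistent_funpow_diff_round)

lemma prec_run_to_end: "prec (snd U) (snd (run_to_end E Lt U))"
  unfolding run_to_end_def by (rule observed_funpow_diff_round(2))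

lemma run_to_end_cong:
  "Lt' \<inter> observed (run_to_end E Lt U) = Lt \<inter> observed (run_to_end E Lt U)
     \<Longrightarrow> run_to_end E Lt' U = run_to_end E Lt U"
  unfolding run_to_end_def by (rule funpow_diff_round_cong)

text \<open>After termination every edge from an active to an inactive node has been observed
  dead, so any live-edge set avoiding the observed dead edges cannot leave the active set.\<close>
lemma forward_closed_run_to_end:
  assumes "consistent E Lt U" "L \<subseteq> E" "snd (snd (run_to_end E Lt U)) \<inter> L = {}"
  shows "forward_closed L (fst (run_to_end E Lt U))"
  unfolding forward_closed_def
proof (intro allI impI)
  let ?V = "run_to_end E Lt U"
  fix a b assume ab: "(a, b) \<in> L" "a \<in> fst ?V"
  show "b \<in> fst ?V"
  proof (rule ccontr)
    assume "b \<notin> fst ?V"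
    moreover have "(a, b) \<notin> snd (snd ?V)" using ab(1) assms(3) by blast
    ultimately have "(a, b) \<notin> observed ?V"
      using consistent_run_to_end[OF assms(1)] unfolding consistent_def observed_def by auto
    then have "(a, b) \<in> attempted E ?V" using ab assms(2) \<open>b \<notin> fst ?V\<close> unfolding attempted_def by auto
    then show False using attempted_run_to_end by blast
  qed
qed

lemma active_run_to_end:
  assumes "consistent E Lt U" "Lt \<subseteq> E"
  shows "fst (run_to_end E Lt U) = reach Lt (fst U)"
proof
  show "fst (run_to_end E Lt U) \<subseteq> reach Lt (fst U)"
    unfolding run_to_end_def by (rule active_funpow_diff_round(2))
  have "snd (snd (run_to_end E Lt U)) \<inter> Lt = {}"
    using consistent_run_to_end[OF assms(1)] unfolding consistent_def by blast
  then have "forward_closed Lt (fst (run_to_end E Lt U))"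
    by (rule forward_closed_run_to_end[OF assms])
  moreover have "fst U \<subseteq> fst (run_to_end E Lt U)"
    unfolding run_to_end_def by (rule active_funpow_diff_round(1))
  ultimately show "reach Lt (fst U) \<subseteq> fst (run_to_end E Lt U)" by (rule reach_least)
qed

lemma run_to_end_empty: "run_to_end E Lt ({}, ({}, {})) = ({}, ({}, {}))"
proof -
  have "(diff_round E Lt ^^ n) ({}, ({}, {})) = ({}, ({}, {}))" for n
    by (induction n) (simp_all add: diff_round_eq attempted_def)
  then show ?thesis unfolding run_to_end_def by blast
qed

lemma proc_status_0 [simp]: "proc_status E Lt pol d 0 = ({}, ({}, {}))"
  by (simp add: proc_status_def)

lemma proc_status_Suc:
  "proc_status E Lt pol d (Suc i) = seed_step E Lt pol d (proc_status E Lt pol d i)"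
  by (simp add: proc_status_def)

lemma active_seed_step:
  "fst U \<union> {pol (fst U) (snd U)} \<subseteq> fst (seed_step E Lt pol d U)"
  "fst (seed_step E Lt pol d U) \<subseteq> reach Lt (fst U \<union> {pol (fst U) (snd U)})"
  unfolding seed_step_def using active_funpow_diff_round[where U = "(fst U \<union> {pol (fst U) (snd U)}, snd U)"]
  by simp_all

lemma consistent_proc_status: "consistent E Lt (proc_status E Lt pol d i)"
proof (induction i)
  case (Suc i)
  then show ?case
    unfolding proc_status_Suc seed_step_def
    by (intro consistent_funpow_diff_round) (auto simp: consistent_def observed_def)
qed (simp add: consistent_def observed_def)

lemma proc_status_cong:
  assumes "Lt' \<inter> observed (proc_status E Lt pol d i) = Lt \<inter> observed (proc_status E Lt pol d i)"
  shows "proc_status E Lt' pol d i = proc_status E Lt pol d i"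
  using assms
proof (induction i)
  case (Suc i)
  let ?U = "proc_status E Lt pol d i"
  let ?U' = "(fst ?U \<union> {pol (fst ?U) (snd ?U)}, snd ?U)"
  have "observed ?U \<subseteq> observed (proc_status E Lt pol d (Suc i))"
    using observed_funpow_diff_round(1)[where U = ?U' and E = E and Lt = Lt and n = d]
    unfolding proc_status_Suc seed_step_def by (simp add: observed_def)
  then have "proc_status E Lt' pol d i = ?U" using Suc by blast
  moreover have "seed_step E Lt' pol d ?U = seed_step E Lt pol d ?U"
    using Suc.prems unfolding proc_status_Suc seed_step_def by (rule funpow_diff_round_cong)
  ultimately show ?case by (simp add: proc_status_Suc)
qed simp

lemma proc_status_cong_out_edges:
  assumes "fst (proc_status E Lt pol d i) \<subseteq> X" "\<And>e. fst e \<in> X \<Longrightarrow> e \<in> Lt' \<longleftrightarrow> e \<in> Lt"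
  shows "proc_status E Lt' pol d i = proc_status E Lt pol d i"
  using consistent_observed_subset[OF consistent_proc_status] assms
  by (intro proc_status_cong) blast

section \<open>Conditioning on the observed edges\<close>

definition extensions :: "'v edge set \<Rightarrow> 'v realization \<Rightarrow> 'v realization set" where
  "extensions E phi = {psi \<in> full_realizations E. prec phi psi}"

lemma full_realizations_iff: "psi \<in> full_realizations E \<longleftrightarrow> fst psi \<subseteq> E \<and> snd psi = E - fst psi"
  unfolding full_realizations_def is_realization_def by auto

lemma Delta_f_inf_extensions:
  "Delta_f_inf E p S Vs phi = (\<Sum>psi\<in>extensions E phi. cond_prob p psi phi * Delta_inf S Vs psi)"
  by (simp add: Delta_f_inf_def extensions_def)

lemma cond_prob_nonneg:
  "\<forall>e\<in>E. 0 \<le> p e \<and> p e \<le> 1 \<Longrightarrow> psi \<in> full_realizations E \<Longrightarrow> 0 \<le> cond_prob p psi phi"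
  unfolding cond_prob_def full_realizations_iff by (intro mult_nonneg_nonneg prod_nonneg) auto

lemma cond_prob_trans:
  fixes psi :: "'v::finite realization"
  assumes "prec phi phi'" "prec phi' psi"
  shows "cond_prob p psi phi = cond_prob p psi phi' * cond_prob p phi' phi"
proof -
  have live: "fst psi - fst phi = (fst psi - fst phi') \<union> (fst phi' - fst phi)"
    and dead: "snd psi - snd phi = (snd psi - snd phi') \<union> (snd phi' - snd phi)"
    using assms unfolding prec_def by auto
  show ?thesis unfolding cond_prob_def live dead
    by (subst prod.union_disjoint, simp, simp, blast)+ (simp add: algebra_simps)
qed

text \<open>(K, B - K) is the realization that has observed exactly the edges of B, those of K live.\<close>
lemma sum_extensions:
  assumes fin: "finite E" and "B \<subseteq> E" "K \<subseteq> B"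
  shows "(\<Sum>psi\<in>extensions E (K, B - K). cond_prob p psi (K, B - K) * f psi)
       = (\<Sum>m\<in>Pow (E - B). subset_weight p (E - B) m * f (K \<union> m, E - (K \<union> m)))"
proof -
  let ?g = "\<lambda>m. (K \<union> m, E - (K \<union> m))"
  have bij: "bij_betw ?g (Pow (E - B)) (extensions E (K, B - K))"
  proof (rule bij_betw_byWitness[where f' = "\<lambda>psi. fst psi - B"])
    show "\<forall>psi\<in>extensions E (K, B - K). ?g (fst psi - B) = psi"
      using assms unfolding extensions_def full_realizations_iff prec_def
      by (auto simp: prod_eq_iff)
    show "?g ` Pow (E - B) \<subseteq> extensions E (K, B - K)"
      using assms by (auto simp: extensions_def full_realizations_iff prec_def) blast+
  qed (use assms in \<open>auto simp: extensions_def full_realizations_iff\<close>)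
  have weight: "cond_prob p (?g m) (K, B - K) = subset_weight p (E - B) m" if "m \<in> Pow (E - B)" for m
  proof -
    have "fst (?g m) - K = m" "snd (?g m) - (B - K) = (E - B) - m" using that assms by auto
    then show ?thesis unfolding cond_prob_def subset_weight_def by simp
  qed
  have "(\<Sum>m\<in>Pow (E - B). subset_weight p (E - B) m * f (?g m))
      = (\<Sum>m\<in>Pow (E - B). cond_prob p (?g m) (K, B - K) * f (?g m))"
    using weight by simp
  also have "\<dots> = (\<Sum>psi\<in>extensions E (K, B - K). cond_prob p psi (K, B - K) * f psi)"
    by (rule sum.reindex_bij_betw[OF bij])
  finally show ?thesis by simp
qed

lemma sum_extensions_consistent:
  assumes "finite E" "consistent E Lt U"
  shows "(\<Sum>psi\<in>extensions E (snd U). cond_prob p psi (snd U) * f psi)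
       = (\<Sum>m\<in>Pow (E - observed U). subset_weight p (E - observed U) m
            * f (Lt \<inter> observed U \<union> m, E - (Lt \<inter> observed U \<union> m)))"
proof -
  have "snd U = (Lt \<inter> observed U, observed U - Lt \<inter> observed U)"
    using consistent_snd[OF assms(2)] by auto
  moreover have "observed U \<subseteq> E" using consistent_observed_subset[OF assms(2)] by blast
  ultimately show ?thesis using sum_extensions[OF assms(1), of "observed U" "Lt \<inter> observed U" p f] by simp
qed

lemma sum_extensions_cond_prob:
  assumes "finite E" "consistent E Lt U"
  shows "(\<Sum>psi\<in>extensions E (snd U). cond_prob p psi (snd U)) = 1"
  using sum_extensions_consistent[OF assms, of p "\<lambda>_. 1"] sum_subset_weight[of "E - observed U" p] assms(1)
  by simp

lemma sum_full_realizations: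
  assumes "finite E"
  shows "(\<Sum>psi\<in>full_realizations E. real_prob p psi * f psi)
       = (\<Sum>M\<in>Pow E. subset_weight p E M * f (M, E - M))"
proof -
  have "extensions E ({}, {} - {}) = full_realizations E" by (auto simp: extensions_def prec_def)
  then show ?thesis using sum_extensions[OF assms, of "{}" "{}" p f] by (simp add: real_prob_def)
qed

lemma real_prob_eq_subset_weight: "real_prob p (M, E - M) = subset_weight p E M"
  unfolding real_prob_def cond_prob_def subset_weight_def by simp

lemma F_val_eq:
  fixes E :: "('v::finite \<times> 'v) set"
  shows "F_val E p pol k d
       = (\<Sum>M\<in>Pow E. subset_weight p E M * real (card (reach M (fst (proc_status E M pol d k)))))"
  unfolding F_val_def sum_full_realizations[OF finite]
  by (intro sum.cong refl) (simp add: active_run_to_end[OF consistent_proc_status])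

text \<open>The tower property applied to the information revealed up to the i-th seeding step.\<close>
lemma sum_proc_status_condition:
  fixes E :: "('v::finite \<times> 'v) set" and pol :: "'v policy" and d i :: nat
  defines "U \<equiv> \<lambda>M. proc_status E M pol d i"
  shows "(\<Sum>M\<in>Pow E. subset_weight p E M * Z (U M) M)
       = (\<Sum>M\<in>Pow E. subset_weight p E M *
            (\<Sum>psi\<in>extensions E (snd (U M)). cond_prob p psi (snd (U M)) * Z (U M) (fst psi)))"
proof -
  have "(\<Sum>M\<in>Pow E. subset_weight p E M * Z (U M) M)
      = (\<Sum>M\<in>Pow E. subset_weight p E M * (\<Sum>m\<in>Pow (E - observed (U M)).
           subset_weight p (E - observed (U M)) m * Z (U M) (M \<inter> observed (U M) \<union> m)))"
  proof (rule subset_weight_tower[symmetric, OF finite])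
    show "observed (U L) \<subseteq> E" for L
      using consistent_observed_subset[OF consistent_proc_status] unfolding U_def by blast
    show "observed (U L') = observed (U L) \<and> U L' = U L"
      if "L' \<inter> observed (U L) = L \<inter> observed (U L)" for L L'
      using proc_status_cong[OF that[unfolded U_def]] unfolding U_def by simp
  qed
  also have "\<dots> = (\<Sum>M\<in>Pow E. subset_weight p E M *
            (\<Sum>psi\<in>extensions E (snd (U M)). cond_prob p psi (snd (U M)) * Z (U M) (fst psi)))"
    unfolding U_def sum_extensions_consistent[OF finite consistent_proc_status] by simp
  finally show ?thesis .
qed

section \<open>Expected gains at terminated statuses\<close>

definition out_edges :: "'v edge set \<Rightarrow> 'v set \<Rightarrow> 'v edge set" where
  "out_edges E Y = {e \<in> E. fst e \<in> Y}"

definition spread_outside :: "'v edge set \<Rightarrow> ('v edge \<Rightarrow> real) \<Rightarrow> 'v \<Rightarrow> 'v set \<Rightarrow> real" where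
  "spread_outside E p v Y = (\<Sum>M\<in>Pow E. subset_weight p E M * real (card (reach (M - out_edges E Y) {v} - Y)))"

definition max_spread_outside :: "'v::finite edge set \<Rightarrow> ('v edge \<Rightarrow> real) \<Rightarrow> 'v set \<Rightarrow> real" where
  "max_spread_outside E p Y = Max (range (\<lambda>v. spread_outside E p v Y))"

lemma spread_outside_eq:
  assumes "finite E"
  shows "spread_outside E p v Y
       = (\<Sum>m\<in>Pow (E - out_edges E Y). subset_weight p (E - out_edges E Y) m * real (card (reach m {v} - Y)))"
proof -
  have "spread_outside E p v Y
      = (\<Sum>M\<in>Pow E. subset_weight p E M * real (card (reach (M \<inter> (E - out_edges E Y)) {v} - Y)))"
    unfolding spread_outside_def by (intro sum.cong refl) (auto intro!: arg_cong[where f = "\<lambda>L. card (reach L {v} - Y)"])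
  also have "\<dots> = (\<Sum>m\<in>Pow (E - out_edges E Y). subset_weight p (E - out_edges E Y) m * real (card (reach m {v} - Y)))"
    by (rule sum_subset_weight_marginal[OF assms]) auto
  finally show ?thesis .
qed

lemma spread_outside_antimono:
  fixes E :: "('v::finite \<times> 'v) set"
  assumes "\<forall>e\<in>E. 0 \<le> p e \<and> p e \<le> 1" "Y \<subseteq> Y'"
  shows "spread_outside E p v Y' \<le> spread_outside E p v Y"
  unfolding spread_outside_def
proof (rule sum_mono)
  fix M assume M: "M \<in> Pow E"
  have "out_edges E Y \<subseteq> out_edges E Y'" using assms(2) by (auto simp: out_edges_def)
  then have "reach (M - out_edges E Y') {v} - Y' \<subseteq> reach (M - out_edges E Y) {v} - Y"
    using reach_mono[of "{v}" "{v}" "M - out_edges E Y'" "M - out_edges E Y"] assms(2) by auto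
  then have "card (reach (M - out_edges E Y') {v} - Y') \<le> card (reach (M - out_edges E Y) {v} - Y)"
    by (simp add: card_mono)
  then show "subset_weight p E M * real (card (reach (M - out_edges E Y') {v} - Y'))
           \<le> subset_weight p E M * real (card (reach (M - out_edges E Y) {v} - Y))"
    using subset_weight_nonneg[OF assms(1)] M by (simp add: mult_left_mono)
qed

lemma max_spread_outside_UNIV: "max_spread_outside E p UNIV = 0"
  by (simp add: max_spread_outside_def spread_outside_def)

text \<open>At a terminated status with active set R every edge leaving R has been observed, and
  the live ones stay inside R, so the expected gain of a seed v is its spread outside R.\<close>
lemma Delta_f_inf_run_to_end:
  fixes E :: "('v::finite \<times> 'v) set"
  assumes cons: "consistent E M U" and "M \<subseteq> E"
  defines "V \<equiv> run_to_end E M U"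
  shows "Delta_f_inf E p (fst V) {v} (snd V) = spread_outside E p v (fst V)"
proof -
  let ?R = "fst V" and ?O = "observed V"
  have consV: "consistent E M V" unfolding V_def by (rule consistent_run_to_end[OF cons])
  have O_out: "?O \<subseteq> out_edges E ?R"
    using consistent_observed_subset[OF consV] by (auto simp: out_edges_def)
  have gain: "Delta_inf ?R {v} (M \<inter> ?O \<union> m, E - (M \<inter> ?O \<union> m)) = real (card (reach (m \<inter> (E - out_edges E ?R)) {v} - ?R))"
    if m: "m \<in> Pow (E - ?O)" for m
  proof -
    let ?N = "M \<inter> ?O \<union> m"
    have "snd (snd V) \<inter> ?N = {}" using consV m unfolding consistent_def observed_def by auto
    moreover have "?N \<subseteq> E" using m \<open>M \<subseteq> E\<close> by auto
    ultimately have "forward_closed ?N ?R"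
      using forward_closed_run_to_end[OF cons] unfolding V_def by blast
    moreover have "{e \<in> ?N. fst e \<notin> ?R} = m \<inter> (E - out_edges E ?R)" using O_out m by (auto simp: out_edges_def)
    ultimately show ?thesis using Delta_inf_forward_closed[of "(?N, E - ?N)" ?R v] by simp
  qed
  have "Delta_f_inf E p ?R {v} (snd V)
      = (\<Sum>m\<in>Pow (E - ?O). subset_weight p (E - ?O) m * real (card (reach (m \<inter> (E - out_edges E ?R)) {v} - ?R)))"
    unfolding Delta_f_inf_extensions sum_extensions_consistent[OF finite consV]
    using gain by (intro sum.cong refl) simp
  also have "\<dots> = spread_outside E p v ?R"
    unfolding spread_outside_eq[OF finite]
    by (rule sum_subset_weight_marginal[OF finite]) (use O_out in auto)
  finally show ?thesis .
qed

lemma max_gain_run_to_end: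
  fixes E :: "('v::finite \<times> 'v) set"
  assumes "consistent E M U" "M \<subseteq> E"
  shows "max_gain E p (run_to_end E M U) = max_spread_outside E p (reach M (fst U))"
  using Delta_f_inf_run_to_end[OF assms] active_run_to_end[OF assms]
  unfolding max_gain_def max_spread_outside_def by simp

lemma prec_consistent_iff:
  assumes "consistent E Lt V" "psi \<in> full_realizations E"
  shows "prec (snd V) psi \<longleftrightarrow> fst psi \<inter> observed V = Lt \<inter> observed V"
proof -
  obtain Ob where Ob: "snd V = (Lt \<inter> Ob, Ob - Lt)" "Ob \<subseteq> E" "observed V = Ob"
    using consistent_snd[OF assms(1)] consistent_observed_subset[OF assms(1)] by blast
  have "fst psi \<subseteq> E" "snd psi = E - fst psi" using assms(2) unfolding full_realizations_iff by auto
  then show ?thesis using Ob(2) unfolding prec_def Ob(1,3) by auto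
qed

lemma consistent_extension:
  "consistent E Lt U \<Longrightarrow> psi \<in> extensions E (snd U) \<Longrightarrow> consistent E (fst psi) U"
  unfolding extensions_def using prec_consistent_iff consistent_change_live by (metis (mono_tags, lifting) mem_Collect_eq)

lemma extensions_run_to_end_fiber:
  fixes E :: "('v::finite \<times> 'v) set"
  assumes cons: "consistent E Lt U" and psi0: "psi0 \<in> extensions E (snd U)"
  defines "V \<equiv> run_to_end E (fst psi0) U"
  shows "{psi \<in> extensions E (snd U). run_to_end E (fst psi) U = V} = extensions E (snd V)"
proof (intro set_eqI iffI)
  have consV: "consistent E (fst psi0) V"
    unfolding V_def by (rule consistent_run_to_end[OF consistent_extension[OF cons psi0]])
  fix psi
  assume psi: "psi \<in> {psi \<in> extensions E (snd U). run_to_end E (fst psi) U = V}"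
  then have ext: "psi \<in> extensions E (snd U)" and V: "run_to_end E (fst psi) U = V" by simp_all
  have "consistent E (fst psi) V"
    using consistent_run_to_end[OF consistent_extension[OF cons ext]] V by simp
  then show "psi \<in> extensions E (snd V)"
    using psi prec_consistent_iff[of E "fst psi" V psi] unfolding extensions_def by auto
next
  have consV: "consistent E (fst psi0) V"
    unfolding V_def by (rule consistent_run_to_end[OF consistent_extension[OF cons psi0]])
  fix psi assume psi: "psi \<in> extensions E (snd V)"
  then have "prec (snd U) psi"
    using prec_run_to_end[of U E "fst psi0"] unfolding extensions_def V_def prec_def by auto
  moreover have "fst psi \<inter> observed V = fst psi0 \<inter> observed V"
    using psi prec_consistent_iff[OF consV] unfolding extensions_def by blast
  then have "run_to_end E (fst psi) U = V" unfolding V_def by (rule run_to_end_cong)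
  ultimately show "psi \<in> {psi \<in> extensions E (snd U). run_to_end E (fst psi) U = V}"
    using psi unfolding extensions_def by auto
qed

lemma sum_final_statuses:
  fixes E :: "('v::finite \<times> 'v) set"
  assumes cons: "consistent E Lt U"
  shows "(\<Sum>V\<in>final_statuses E U. cond_prob p (snd V) (snd U) * G V)
       = (\<Sum>psi\<in>extensions E (snd U). cond_prob p psi (snd U) * G (run_to_end E (fst psi) U))"
proof -
  let ?A = "extensions E (snd U)" and ?rho = "\<lambda>psi. run_to_end E (fst psi) U"
  have image: "final_statuses E U = ?rho ` ?A"
    unfolding final_statuses_def extensions_def by (auto simp: image_iff) (metis fst_conv)
  have fiber: "(\<Sum>psi\<in>{psi \<in> ?A. ?rho psi = V}. cond_prob p psi (snd U) * G (?rho psi))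
      = cond_prob p (snd V) (snd U) * G V" if V: "V \<in> ?rho ` ?A" for V
  proof -
    obtain psi0 where psi0: "psi0 \<in> ?A" "V = ?rho psi0" using V by blast
    have consV: "consistent E (fst psi0) V"
      unfolding psi0(2) by (rule consistent_run_to_end[OF consistent_extension[OF cons psi0(1)]])
    have fib: "{psi \<in> ?A. ?rho psi = V} = extensions E (snd V)"
      unfolding psi0(2) by (rule extensions_run_to_end_fiber[OF cons psi0(1)])
    have "(\<Sum>psi\<in>{psi \<in> ?A. ?rho psi = V}. cond_prob p psi (snd U) * G (?rho psi))
        = (\<Sum>psi\<in>extensions E (snd V). cond_prob p psi (snd V) * (cond_prob p (snd V) (snd U) * G V))"
    proof (rule sum.cong[OF fib])
      fix psi assume psi: "psi \<in> extensions E (snd V)"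
      have "?rho psi = V" using psi unfolding fib[symmetric] by blast
      moreover have "prec (snd V) psi" using psi by (simp add: extensions_def)
      ultimately show "cond_prob p psi (snd U) * G (?rho psi) = cond_prob p psi (snd V) * (cond_prob p (snd V) (snd U) * G V)"
        using cond_prob_trans[OF prec_run_to_end[where U = U and E = E and Lt = "fst psi0", folded psi0(2)], of psi p]
        by simp
    qed
    also have "\<dots> = (\<Sum>psi\<in>extensions E (snd V). cond_prob p psi (snd V)) * (cond_prob p (snd V) (snd U) * G V)"
      by (rule sum_distrib_right[symmetric])
    finally show ?thesis using sum_extensions_cond_prob[OF finite consV] by simp
  qed
  have "(\<Sum>psi\<in>?A. cond_prob p psi (snd U) * G (?rho psi))
      = (\<Sum>V\<in>?rho ` ?A. \<Sum>psi\<in>{psi \<in> ?A. ?rho psi = V}. cond_prob p psi (snd U) * G (?rho psi))"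
    by (rule sum.image_gen) simp
  also have "\<dots> = (\<Sum>V\<in>?rho ` ?A. cond_prob p (snd V) (snd U) * G V)"
    using fiber by (rule sum.cong[OF refl])
  finally show ?thesis unfolding image by simp
qed

section \<open>The regret ratio\<close>

definition final_max_gain :: "'v::finite edge set \<Rightarrow> ('v edge \<Rightarrow> real) \<Rightarrow> 'v status \<Rightarrow> real" where
  "final_max_gain E p U = (\<Sum>V\<in>final_statuses E U. cond_prob p (snd V) (snd U) * max_gain E p V)"

lemma alpha_inf_eq: "alpha_inf E p U = final_max_gain E p U / max_gain E p U"
  unfolding alpha_inf_def final_max_gain_def ..

lemma Delta_inf_nonneg: "0 \<le> Delta_inf S Vs (psi :: 'v::finite realization)"
proof -
  have "reach (fst psi) S \<subseteq> reach (fst psi) (S \<union> Vs)" by (rule reach_mono) auto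
  then show ?thesis unfolding Delta_inf_def reach_inf_eq_reach by (simp add: card_mono)
qed

lemma Delta_f_inf_nonneg:
  fixes E :: "('v::finite \<times> 'v) set"
  assumes "\<forall>e\<in>E. 0 \<le> p e \<and> p e \<le> 1"
  shows "0 \<le> Delta_f_inf E p S Vs phi"
  unfolding Delta_f_inf_def
  by (intro sum_nonneg mult_nonneg_nonneg cond_prob_nonneg[OF assms] Delta_inf_nonneg) auto

lemma Delta_f_inf_le_max_gain:
  fixes E :: "('v::finite \<times> 'v) set"
  shows "Delta_f_inf E p (fst U) {v} (snd U) \<le> max_gain E p U"
  unfolding max_gain_def by (rule Max_ge[OF _ rangeI]) simp

lemma max_gain_nonneg:
  fixes E :: "('v::finite \<times> 'v) set"
  assumes "\<forall>e\<in>E. 0 \<le> p e \<and> p e \<le> 1"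
  shows "0 \<le> max_gain E p U"
  using Delta_f_inf_nonneg[OF assms] Delta_f_inf_le_max_gain by (rule order_trans)

lemma reach_eq_UNIV_if_max_gain_eq_0:
  fixes E :: "('v::finite \<times> 'v) set"
  assumes p01: "\<forall>e\<in>E. 0 \<le> p e \<and> p e \<le> 1" and gain0: "max_gain E p U = 0"
    and psi: "psi \<in> extensions E (snd U)" and pos: "0 < cond_prob p psi (snd U)"
  shows "reach (fst psi) (fst U) = UNIV"
proof -
  have "v \<in> reach (fst psi) (fst U)" for v
  proof -
    have terms_nonneg: "\<forall>psi'\<in>extensions E (snd U). 0 \<le> cond_prob p psi' (snd U) * Delta_inf (fst U) {v} psi'"
      by (auto simp: extensions_def intro!: mult_nonneg_nonneg cond_prob_nonneg[OF p01] Delta_inf_nonneg)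
    have "Delta_f_inf E p (fst U) {v} (snd U) = 0"
      using Delta_f_inf_le_max_gain[of E p U v] Delta_f_inf_nonneg[OF p01] gain0 by (simp add: order_antisym)
    then have "cond_prob p psi (snd U) * Delta_inf (fst U) {v} psi = 0"
      using terms_nonneg psi unfolding Delta_f_inf_extensions by (simp add: sum_nonneg_eq_0_iff)
    then have "card (reach (fst psi) (fst U \<union> {v})) = card (reach (fst psi) (fst U))"
      using pos unfolding Delta_inf_def reach_inf_eq_reach by simp
    moreover have "reach (fst psi) (fst U) \<subseteq> reach (fst psi) (fst U \<union> {v})" by (rule reach_mono) auto
    ultimately have "reach (fst psi) (fst U) = reach (fst psi) (fst U \<union> {v})"
      by (simp add: card_subset_eq)
    then show ?thesis using subset_reach[of "fst U \<union> {v}" "fst psi"] by blast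
  qed
  then show ?thesis by blast
qed

lemma final_max_gain_eq_0:
  fixes E :: "('v::finite \<times> 'v) set"
  assumes p01: "\<forall>e\<in>E. 0 \<le> p e \<and> p e \<le> 1" and cons: "consistent E Lt U" and gain0: "max_gain E p U = 0"
  shows "final_max_gain E p U = 0"
proof -
  have "cond_prob p psi (snd U) * max_gain E p (run_to_end E (fst psi) U) = 0"
    if psi: "psi \<in> extensions E (snd U)" for psi
  proof (cases "cond_prob p psi (snd U) = 0")
    case False
    moreover have "0 \<le> cond_prob p psi (snd U)"
      using cond_prob_nonneg[OF p01] psi unfolding extensions_def by blast
    ultimately have "0 < cond_prob p psi (snd U)" by simp
    then have "reach (fst psi) (fst U) = UNIV"
      by (rule reach_eq_UNIV_if_max_gain_eq_0[OF p01 gain0 psi])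
    moreover have "fst psi \<subseteq> E" using psi unfolding extensions_def full_realizations_iff by blast
    ultimately have "max_gain E p (run_to_end E (fst psi) U) = 0"
      using max_gain_run_to_end[OF consistent_extension[OF cons psi], of p] max_spread_outside_UNIV[of E p]
      by simp
    then show ?thesis by simp
  qed simp
  then show ?thesis unfolding final_max_gain_def sum_final_statuses[OF cons] by (intro sum.neutral) blast
qed

lemma proc_status_in_tree_statuses:
  assumes "M \<subseteq> E" "0 < subset_weight p E M" "i < k"
  shows "proc_status E M pol d i \<in> tree_statuses E p pol k d"
proof -
  have "(M, E - M) \<in> full_realizations E" "0 < real_prob p (M, E - M)"
    using assms real_prob_eq_subset_weight[of p M E] by (auto simp: full_realizations_iff)
  then show ?thesis unfolding tree_statuses_def using assms(3) by force
qed

lemma alpha_inf_le_alpha_tree: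
  fixes E :: "('v::finite \<times> 'v) set"
  shows "U \<in> tree_statuses E p pol k d \<Longrightarrow> alpha_inf E p U \<le> alpha_tree E p pol k d"
  unfolding alpha_tree_def tree_statuses_def by (rule Max_ge) auto

lemma final_max_gain_le_alpha_tree:
  fixes E :: "('v::finite \<times> 'v) set" and pol :: "'v policy" and d :: nat
  assumes p01: "\<forall>e\<in>E. 0 \<le> p e \<and> p e \<le> 1" and "M \<subseteq> E" "0 < subset_weight p E M" "i < k"
  defines "U \<equiv> proc_status E M pol d i"
  shows "final_max_gain E p U \<le> alpha_tree E p pol k d * max_gain E p U"
proof (cases "max_gain E p U = 0")
  case True
  then show ?thesis using final_max_gain_eq_0[OF p01 consistent_proc_status] unfolding U_def by simp
next
  case False
  then have pos: "0 < max_gain E p U" using max_gain_nonneg[OF p01] by (simp add: order_less_le)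
  have "final_max_gain E p U = alpha_inf E p U * max_gain E p U"
    using pos unfolding alpha_inf_eq by simp
  also have "\<dots> \<le> alpha_tree E p pol k d * max_gain E p U"
    using alpha_inf_le_alpha_tree[OF proc_status_in_tree_statuses[OF assms(2-4), of pol d]] pos
    unfolding U_def by (simp add: mult_right_mono)
  finally show ?thesis .
qed

text \<open>The initial status lies in the tree and its only final status is itself.\<close>
lemma one_le_alpha_tree:
  fixes E :: "('v::finite \<times> 'v) set"
  assumes p: "\<forall>e\<in>E. 0 < p e \<and> p e \<le> 1" and "0 < k"
  shows "1 \<le> alpha_tree E p pol k d"
proof -
  let ?U0 = "({}, ({}, {})) :: 'v status"
  have p01: "\<forall>e\<in>E. 0 \<le> p e \<and> p e \<le> 1" using p by auto
  have "0 < subset_weight p E E" unfolding subset_weight_def using p by (simp add: prod_pos)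
  then have tree: "?U0 \<in> tree_statuses E p pol k d"
    using proc_status_in_tree_statuses[OF order_refl _ assms(2), of p E pol d] by simp
  have final: "final_statuses E ?U0 = {?U0}"
    unfolding final_statuses_def run_to_end_empty
    by (auto simp: full_realizations_iff prec_def intro!: exI[of _ "(E, {})"])
  have "1 \<le> Delta_f_inf E p {} {v} ({}, {})" for v
  proof -
    have "Delta_f_inf E p {} {v} ({}, {}) = (\<Sum>M\<in>Pow E. subset_weight p E M * Delta_inf {} {v} (M, E - M))"
      using sum_extensions_consistent[OF finite, of E E ?U0 p "Delta_inf {} {v}"]
      by (simp add: Delta_f_inf_extensions consistent_def observed_def)
    also have "\<dots> \<ge> (\<Sum>M\<in>Pow E. subset_weight p E M * 1)"
    proof (rule sum_mono)
      fix M assume "M \<in> Pow E"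
      moreover have "1 \<le> Delta_inf {} {v} (M, E - M)"
        using subset_reach[of "{v}" M] unfolding Delta_inf_def reach_inf_eq_reach
        by (simp add: Suc_le_eq card_gt_0_iff) blast
      ultimately show "subset_weight p E M * 1 \<le> subset_weight p E M * Delta_inf {} {v} (M, E - M)"
        using subset_weight_nonneg[OF p01] by (intro mult_left_mono) auto
    qed
    finally show ?thesis using sum_subset_weight[of E p] by simp
  qed
  then have "1 \<le> max_gain E p ?U0"
    using Delta_f_inf_le_max_gain[of E p ?U0] order_trans by fastforce
  then have "alpha_inf E p ?U0 = 1"
    unfolding alpha_inf_eq final_max_gain_def final by (simp add: cond_prob_def)
  then show ?thesis using alpha_inf_le_alpha_tree[OF tree] by simp
qed

section \<open>The greedy bound\<close>

lemma Delta_f_inf_greedy: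
  "is_greedy E p pi_g \<Longrightarrow> Delta_f_inf E p (fst U) {pi_g (fst U) (snd U)} (snd U) = max_gain E p U"
  unfolding is_greedy_def by (cases U) simp

lemma F_val_Suc_greedy:
  fixes E :: "('v::finite \<times> 'v) set"
  assumes greedy: "is_greedy E p pi_g"
  shows "F_val E p pi_g (Suc i) d - F_val E p pi_g i d
       = (\<Sum>M\<in>Pow E. subset_weight p E M * max_gain E p (proc_status E M pi_g d i))"
proof -
  define U where "U M = proc_status E M pi_g d i" for M
  define Z where "Z V L = Delta_inf (fst V) {pi_g (fst V) (snd V)} (L, E - L)" for V :: "'v status" and L
  have step: "real (card (reach M (fst (proc_status E M pi_g d (Suc i)))))
      - real (card (reach M (fst (proc_status E M pi_g d i)))) = Z (U M) M" for M
  proof -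
    have "reach M (fst (proc_status E M pi_g d (Suc i))) = reach M (fst (U M) \<union> {pi_g (fst (U M)) (snd (U M))})"
      unfolding proc_status_Suc U_def by (rule reach_absorb[OF active_seed_step])
    then show ?thesis unfolding Z_def Delta_inf_def reach_inf_eq_reach U_def by simp
  qed
  have "F_val E p pi_g (Suc i) d - F_val E p pi_g i d = (\<Sum>M\<in>Pow E. subset_weight p E M * Z (U M) M)"
    unfolding F_val_eq sum_subtractf[symmetric] using step by (intro sum.cong refl) (simp add: algebra_simps)
  also have "\<dots> = (\<Sum>M\<in>Pow E. subset_weight p E M *
      (\<Sum>psi\<in>extensions E (snd (U M)). cond_prob p psi (snd (U M)) * Z (U M) (fst psi)))"
    unfolding U_def by (rule sum_proc_status_condition)
  also have "\<dots> = (\<Sum>M\<in>Pow E. subset_weight p E M * max_gain E p (U M))"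
  proof (intro sum.cong refl arg_cong[where f = "(*) _"])
    fix M
    have "Z (U M) (fst psi) = Delta_inf (fst (U M)) {pi_g (fst (U M)) (snd (U M))} psi" for psi
      unfolding Z_def Delta_inf_def reach_inf_eq_reach by simp
    then show "(\<Sum>psi\<in>extensions E (snd (U M)). cond_prob p psi (snd (U M)) * Z (U M) (fst psi)) = max_gain E p (U M)"
      using Delta_f_inf_greedy[OF greedy] unfolding Delta_f_inf_extensions by simp
  qed
  finally show ?thesis unfolding U_def .
qed

lemma sum_max_gain_run_to_end:
  fixes E :: "('v::finite \<times> 'v) set"
  shows "(\<Sum>M\<in>Pow E. subset_weight p E M * max_gain E p (run_to_end E M (proc_status E M pol d i)))
       = (\<Sum>M\<in>Pow E. subset_weight p E M * final_max_gain E p (proc_status E M pol d i))"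
  unfolding sum_proc_status_condition[where Z = "\<lambda>V L. max_gain E p (run_to_end E L V)"]
    final_max_gain_def sum_final_statuses[OF consistent_proc_status] ..

lemma card_reach_Un_proc_status:
  fixes E M :: "('v::finite \<times> 'v) set" and pol :: "'v policy" and d :: nat
  defines "Q \<equiv> proc_status E M pol d"
  shows "real (card (reach M (S \<union> fst (Q n)))) = real (card (reach M S))
     + (\<Sum>m<n. real (card (reach M {pol (fst (Q m)) (snd (Q m))} - reach M (S \<union> fst (Q m)))))"
proof (induction n)
  case (Suc n)
  let ?t = "pol (fst (Q n)) (snd (Q n))" and ?X = "reach M (S \<union> fst (Q n))"
  have "fst (Q (Suc n)) \<subseteq> reach M (S \<union> fst (Q n) \<union> {?t})"
    using active_seed_step(2)[of E M pol d "Q n"] reach_mono[of "fst (Q n) \<union> {?t}" "S \<union> fst (Q n) \<union> {?t}" M M]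
    unfolding Q_def proc_status_Suc by auto
  then have "reach M (S \<union> fst (Q (Suc n))) = reach M (S \<union> fst (Q n) \<union> {?t})"
    using active_seed_step(1)[of "Q n" pol E M d] subset_reach[of "S \<union> fst (Q n) \<union> {?t}" M]
    unfolding Q_def proc_status_Suc by (intro reach_absorb) auto
  also have "\<dots> = ?X \<union> (reach M {?t} - ?X)" using reach_Un[of M "S \<union> fst (Q n)" "{?t}"] by auto
  finally have "card (reach M (S \<union> fst (Q (Suc n)))) = card ?X + card (reach M {?t} - ?X)"
    by (metis card_Un_disjoint finite Diff_disjoint)
  then show ?case using Suc by simp
qed (simp add: Q_def)

text \<open>A seed chosen on the basis of the edges leaving a forward-closed set X has, on
  average, exactly its spread outside X: the edges not leaving X are independent of it.\<close>
lemma sum_card_reach_Diff_eq_spread_outside: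
  fixes E :: "('v::finite \<times> 'v) set" and t :: "('v \<times> 'v) set \<Rightarrow> 'v"
  assumes closed: "\<And>M. M \<subseteq> E \<Longrightarrow> forward_closed M (X M)"
    and local: "\<And>L L'. L \<subseteq> E \<Longrightarrow> L' \<subseteq> E \<Longrightarrow> L' \<inter> out_edges E (X L) = L \<inter> out_edges E (X L)
                  \<Longrightarrow> X L' = X L \<and> t L' = t L"
  shows "(\<Sum>M\<in>Pow E. subset_weight p E M * real (card (reach M {t M} - X M)))
       = (\<Sum>M\<in>Pow E. subset_weight p E M * spread_outside E p (t M) (X M))"
proof -
  define Z where "Z c L = real (card (reach (L - out_edges E (snd c)) {fst c} - snd c))"
    for c :: "'v \<times> 'v set" and L
  have "(\<Sum>M\<in>Pow E. subset_weight p E M * real (card (reach M {t M} - X M)))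
      = (\<Sum>M\<in>Pow E. subset_weight p E M * Z (t M, X M) M)"
  proof (intro sum.cong refl arg_cong[where f = "(*) _"])
    fix M assume "M \<in> Pow E"
    then have "{e \<in> M. fst e \<notin> X M} = M - out_edges E (X M)" by (auto simp: out_edges_def)
    then show "real (card (reach M {t M} - X M)) = Z (t M, X M) M"
      using reach_Diff_forward_closed[OF closed, of M "t M"] \<open>M \<in> Pow E\<close> unfolding Z_def by simp
  qed
  also have "\<dots> = (\<Sum>M\<in>Pow E. subset_weight p E M * (\<Sum>m\<in>Pow (E - out_edges E (X M)).
      subset_weight p (E - out_edges E (X M)) m * Z (t M, X M) (M \<inter> out_edges E (X M) \<union> m)))"
  proof (rule subset_weight_tower[symmetric, OF finite])
    show "out_edges E (X L) \<subseteq> E" for L by (auto simp: out_edges_def)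
    show "out_edges E (X L') = out_edges E (X L) \<and> (t L', X L') = (t L, X L)"
      if "L \<subseteq> E" "L' \<subseteq> E" "L' \<inter> out_edges E (X L) = L \<inter> out_edges E (X L)" for L L'
      using local[OF that] by simp
  qed
  also have "\<dots> = (\<Sum>M\<in>Pow E. subset_weight p E M * spread_outside E p (t M) (X M))"
  proof (intro sum.cong refl arg_cong[where f = "(*) _"])
    fix M
    have "Z (t M, X M) (M \<inter> out_edges E (X M) \<union> m) = real (card (reach m {t M} - X M))"
      if "m \<in> Pow (E - out_edges E (X M))" for m
    proof -
      have "(M \<inter> out_edges E (X M) \<union> m) - out_edges E (X M) = m" using that by auto
      then show ?thesis unfolding Z_def by simp
    qed
    then show "(\<Sum>m\<in>Pow (E - out_edges E (X M)). subset_weight p (E - out_edges E (X M)) m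
        * Z (t M, X M) (M \<inter> out_edges E (X M) \<union> m)) = spread_outside E p (t M) (X M)"
      unfolding spread_outside_eq[OF finite] by simp
  qed
  finally show ?thesis .
qed

text \<open>Since the model need not be adaptive submodular, the gain of another
  policy's seed is compared with the best gain after the greedy diffusion has terminated;
  the regret ratio then relates this to the best gain at the seeding step.\<close>
lemma sum_seed_gain_le_sum_max_gain_run_to_end:
  fixes E :: "('v::finite \<times> 'v) set" and pi_g pi_s :: "'v policy" and d i m :: nat
  assumes p01: "\<forall>e\<in>E. 0 \<le> p e \<and> p e \<le> 1"
  defines "U \<equiv> \<lambda>M. proc_status E M pi_g d i" and "Q \<equiv> \<lambda>M. proc_status E M pi_s d m"
  shows "(\<Sum>M\<in>Pow E. subset_weight p E M * real (card (reach M {pi_s (fst (Q M)) (snd (Q M))}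
             - reach M (fst (U M) \<union> fst (Q M)))))
       \<le> (\<Sum>M\<in>Pow E. subset_weight p E M * max_gain E p (run_to_end E M (U M)))"
proof -
  define t where "t M = pi_s (fst (Q M)) (snd (Q M))" for M
  define X where "X M = reach M (fst (U M) \<union> fst (Q M))" for M
  have local: "X L' = X L \<and> t L' = t L"
    if "L \<subseteq> E" "L' \<subseteq> E" "L' \<inter> out_edges E (X L) = L \<inter> out_edges E (X L)" for L L'
  proof -
    have agree: "e \<in> L' \<longleftrightarrow> e \<in> L" if "fst e \<in> X L" for e
      using that \<open>L \<subseteq> E\<close> \<open>L' \<subseteq> E\<close> \<open>L' \<inter> out_edges E (X L) = L \<inter> out_edges E (X L)\<close>
      unfolding out_edges_def by blast
    have "fst (U L) \<subseteq> X L" "fst (Q L) \<subseteq> X L"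
      using subset_reach[of "fst (U L) \<union> fst (Q L)" L] unfolding X_def by blast+
    then have UQ: "U L' = U L" "Q L' = Q L"
      unfolding U_def Q_def using proc_status_cong_out_edges agree by blast+
    have "reach L' (fst (U L) \<union> fst (Q L)) = X L" unfolding X_def by (rule reach_cong) (simp add: agree X_def)
    then have "X L' = X L" unfolding X_def UQ .
    then show ?thesis unfolding t_def UQ by simp
  qed
  have "(\<Sum>M\<in>Pow E. subset_weight p E M * real (card (reach M {t M} - X M)))
      = (\<Sum>M\<in>Pow E. subset_weight p E M * spread_outside E p (t M) (X M))"
  proof (rule sum_card_reach_Diff_eq_spread_outside)
    show "forward_closed M (X M)" for M unfolding X_def by (rule forward_closed_reach)
  qed (rule local)
  also have "\<dots> \<le> (\<Sum>M\<in>Pow E. subset_weight p E M * max_spread_outside E p (reach M (fst (U M))))"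
  proof (intro sum_mono mult_left_mono)
    fix M assume "M \<in> Pow E"
    then show "0 \<le> subset_weight p E M" using subset_weight_nonneg[OF p01] by blast
    have "spread_outside E p (t M) (X M) \<le> spread_outside E p (t M) (reach M (fst (U M)))"
      unfolding X_def by (intro spread_outside_antimono[OF p01] reach_mono[OF Un_upper1 order_refl])
    also have "\<dots> \<le> max_spread_outside E p (reach M (fst (U M)))"
      unfolding max_spread_outside_def by (rule Max_ge[OF _ rangeI]) simp
    finally show "spread_outside E p (t M) (X M) \<le> max_spread_outside E p (reach M (fst (U M)))" .
  qed
  also have "\<dots> = (\<Sum>M\<in>Pow E. subset_weight p E M * max_gain E p (run_to_end E M (U M)))"
    unfolding U_def by (intro sum.cong refl) (simp add: max_gain_run_to_end[OF consistent_proc_status])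
  finally show ?thesis unfolding t_def X_def .
qed

lemma sum_max_gain_run_to_end_le_alpha_tree:
  fixes E :: "('v::finite \<times> 'v) set"
  assumes p01: "\<forall>e\<in>E. 0 \<le> p e \<and> p e \<le> 1" and greedy: "is_greedy E p pi_g" and "i < k"
  shows "(\<Sum>M\<in>Pow E. subset_weight p E M * max_gain E p (run_to_end E M (proc_status E M pi_g d i)))
       \<le> alpha_tree E p pi_g k d * (F_val E p pi_g (Suc i) d - F_val E p pi_g i d)"
proof -
  let ?U = "\<lambda>M. proc_status E M pi_g d i" and ?\<alpha> = "alpha_tree E p pi_g k d"
  have "(\<Sum>M\<in>Pow E. subset_weight p E M * final_max_gain E p (?U M))
      \<le> (\<Sum>M\<in>Pow E. subset_weight p E M * (?\<alpha> * max_gain E p (?U M)))"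
  proof (rule sum_mono)
    fix M assume M: "M \<in> Pow E"
    show "subset_weight p E M * final_max_gain E p (?U M) \<le> subset_weight p E M * (?\<alpha> * max_gain E p (?U M))"
    proof (cases "subset_weight p E M = 0")
      case False
      then have "0 < subset_weight p E M" using subset_weight_nonneg[OF p01] M by (simp add: order_less_le)
      then show ?thesis using final_max_gain_le_alpha_tree[OF p01 _ _ \<open>i < k\<close>] M by (simp add: mult_left_mono)
    qed simp
  qed
  then show ?thesis
    unfolding sum_max_gain_run_to_end F_val_Suc_greedy[OF greedy] by (simp add: sum_distrib_left algebra_simps)
qed

lemma F_val_le_greedy_step:
  fixes E :: "('v::finite \<times> 'v) set"
  assumes p01: "\<forall>e\<in>E. 0 \<le> p e \<and> p e \<le> 1" and greedy: "is_greedy E p pi_g" and "i < k"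
  shows "F_val E p pi_s k d \<le> F_val E p pi_g i d
           + real k * alpha_tree E p pi_g k d * (F_val E p pi_g (Suc i) d - F_val E p pi_g i d)"
proof -
  define S where "S M = fst (proc_status E M pi_g d i)" for M
  define Q where "Q M = proc_status E M pi_s d" for M
  define g where "g m M = real (card (reach M {pi_s (fst (Q M m)) (snd (Q M m))} - reach M (S M \<union> fst (Q M m))))"
    for m M
  define B where "B = (\<Sum>M\<in>Pow E. subset_weight p E M * max_gain E p (run_to_end E M (proc_status E M pi_g d i)))"
  have W: "0 \<le> subset_weight p E M" if "M \<in> Pow E" for M using subset_weight_nonneg[OF p01] that by blast
  have "F_val E p pi_s k d \<le> (\<Sum>M\<in>Pow E. subset_weight p E M * real (card (reach M (S M \<union> fst (Q M k)))))"
    unfolding F_val_eq Q_def using W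
    by (intro sum_mono mult_left_mono of_nat_mono card_mono finite reach_mono[OF Un_upper2 order_refl]) auto
  also have "\<dots> = (\<Sum>M\<in>Pow E. subset_weight p E M * (real (card (reach M (S M))) + (\<Sum>m<k. g m M)))"
    unfolding g_def Q_def by (simp only: card_reach_Un_proc_status)
  also have "\<dots> = F_val E p pi_g i d + (\<Sum>m<k. \<Sum>M\<in>Pow E. subset_weight p E M * g m M)"
    unfolding F_val_eq[of E p pi_g i d] S_def
    by (simp add: distrib_left sum.distrib sum_distrib_left sum.swap[of _ "{..<k}"])
  also have "\<dots> \<le> F_val E p pi_g i d + (\<Sum>m<k. B)"
    unfolding g_def B_def S_def Q_def
    by (intro add_left_mono sum_mono sum_seed_gain_le_sum_max_gain_run_to_end[OF p01])
  also have "\<dots> \<le> F_val E p pi_g i d + real k * (alpha_tree E p pi_g k d * (F_val E p pi_g (Suc i) d - F_val E p pi_g i d))"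
    unfolding B_def using sum_max_gain_run_to_end_le_alpha_tree[OF p01 greedy \<open>i < k\<close>, of d]
    by (simp add: mult_left_mono)
  finally show ?thesis by (simp add: algebra_simps)
qed

text \<open>The classical recurrence behind the 1 - 1/e bound: each step closes at least a
  1/(k\<alpha>) fraction of the remaining gap, and (1 - 1/(k\<alpha>))^k \<le> e^(-1/\<alpha>).\<close>
lemma gap_recurrence_bound:
  fixes a :: "nat \<Rightarrow> real"
  assumes step: "\<And>i. i < k \<Longrightarrow> OPT \<le> a i + real k * \<alpha> * (a (Suc i) - a i)"
    and "1 \<le> \<alpha>" "0 < k" "0 \<le> a 0" "0 \<le> OPT"
  shows "(1 - exp (- 1 / \<alpha>)) * OPT \<le> a k"
proof -
  define c where "c = 1 - 1 / (real k * \<alpha>)"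
  have "1 \<le> real k" using assms(3) by simp
  then have k\<alpha>: "1 \<le> real k * \<alpha>" using mult_mono[of 1 "real k" 1 \<alpha>] assms(2) by simp
  have c: "0 \<le> c" "c \<le> exp (- 1 / (real k * \<alpha>))"
    unfolding c_def using k\<alpha> exp_ge_add_one_self[of "- 1 / (real k * \<alpha>)"] by (simp_all add: field_simps)
  have gap: "OPT - a i \<le> c ^ i * OPT" if "i \<le> k" for i
    using that
  proof (induction i)
    case (Suc i)
    have "OPT - a i \<le> (a (Suc i) - a i) * (real k * \<alpha>)" using step[of i] Suc.prems by (simp add: algebra_simps)
    then have "(OPT - a i) / (real k * \<alpha>) \<le> a (Suc i) - a i"
      using k\<alpha> by (simp add: divide_le_eq)
    then have "OPT - a (Suc i) \<le> c * (OPT - a i)"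
      unfolding c_def by (simp add: algebra_simps)
    also have "\<dots> \<le> c * (c ^ i * OPT)" using Suc c by (intro mult_left_mono) auto
    finally show ?case by simp
  qed (use assms(4) in simp)
  have "c ^ k \<le> exp (- 1 / (real k * \<alpha>)) ^ k" by (rule power_mono[OF c(2,1)])
  also have "\<dots> = exp (- 1 / \<alpha>)" using assms(3) by (simp add: exp_of_nat_mult[symmetric] field_simps)
  finally have "OPT - a k \<le> exp (- 1 / \<alpha>) * OPT"
    using gap[of k] mult_right_mono[OF _ assms(5)] by fastforce
  then show ?thesis by (simp add: algebra_simps)
qed

theorem theorem1:
  fixes E :: "('v::finite \<times> 'v) set" and p :: "'v \<times> 'v \<Rightarrow> real"
    and k d :: nat and pi_g pi_s :: "'v policy"
  assumes "\<forall>e\<in>E. 0 < p e \<and> p e \<le> 1"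
    and "k > 0" and "d > 0"
    and "is_greedy E p pi_g"
  shows "F_val E p pi_g k d \<ge> (1 - exp (- 1 / alpha_tree E p pi_g k d)) * F_val E p pi_s k d"
proof (rule gap_recurrence_bound[where a = "\<lambda>i. F_val E p pi_g i d"])
  have p01: "\<forall>e\<in>E. 0 \<le> p e \<and> p e \<le> 1" using assms(1) by auto
  show "F_val E p pi_s k d \<le> F_val E p pi_g i d
          + real k * alpha_tree E p pi_g k d * (F_val E p pi_g (Suc i) d - F_val E p pi_g i d)" if "i < k" for i
    by (rule F_val_le_greedy_step[OF p01 assms(4) that])
  show "1 \<le> alpha_tree E p pi_g k d" by (rule one_le_alpha_tree[OF assms(1,2)])
  show "0 \<le> F_val E p pi_g 0 d" "0 \<le> F_val E p pi_s k d"
    unfolding F_val_eq using subset_weight_nonneg[OF p01] by (auto intro!: sum_nonneg)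
qed (rule assms(2))

end
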